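(* Let $\epsilon\in(0,1/e]$ and $\eta=\epsilon/\ln(1/\epsilon)$. Let $D$ be a regular distribution with revenue curve $R(q)=q\,v^D(q)$, let $q\in(0,1)$ and $0<\Delta\le q(1-q)\eta$. If $\tilde v$ is any value with $v^D(q+\Delta/2)\le\tilde v\le v^D(q-\Delta/2)$ (in particular, a targeted sample of $D$ from the quantile interval $[q-\Delta/2,q+\Delta/2]$), then the estimate $\tilde R(q)=q\,\tilde v$ satisfies $$\frac{|\tilde R(q)-R(q)|}{R(q)}\le\eta.$$
   Context: Quantile $q^D(v)=\Pr_{x\sim D}[x\ge v]$; value at quantile $v^D(q)=\sup\{v\ge0:q^D(v)\ge q\}$, nonincreasing in $q$. $D$ is regular: it has a density and its revenue curve $R(q)=q\,v^D(q)$ is concave on $(0,1]$ (with $R\ge0$). A targeted sample from $[a,b]$ is $v^D(u)$ with $u$ uniform on $[a,b]$. *)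

theory Defs
  imports "HOL-Probability.Probability"
begin

definition quantile_of :: "real measure \<Rightarrow> real \<Rightarrow> real" where
  "quantile_of D v = measure D {x. v \<le> x}"

definition value_at :: "real measure \<Rightarrow> real \<Rightarrow> real" where
  "value_at D q = Sup {v. 0 \<le> v \<and> q \<le> quantile_of D v}"

definition revenue :: "real measure \<Rightarrow> real \<Rightarrow> real" where
  "revenue D q = q * value_at D q"

definition regular :: "real measure \<Rightarrow> bool" where
  "regular D \<longleftrightarrow> prob_space D \<and>
     (\<exists>f. f \<in> borel_measurable borel \<and> D = density lborel f) \<and>
     concave_on {0<..1} (revenue D) \<and>
     (\<forall>q\<in>{0<..1}. 0 \<le> revenue D q)"

end

theory Submission
  imports Defs
begin

text \<open>Concavity of the revenue curve and \<open>R 1 \<ge> 0\<close> make \<open>R x / (1 - x)\<close> nondecreasing,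
  since on \<open>[x, 1]\<close> the curve lies above the chord from \<open>(x, R x)\<close> to \<open>(1, R 1)\<close>.
  Raising the quantile from \<open>q - \<Delta>/2\<close> to \<open>q\<close>, or from \<open>q\<close> to \<open>q + \<Delta>/2\<close>, thus changes the
  value \<open>R(q)/q\<close> by a factor \<open>1 \<plusminus> O(\<Delta> / (q (1 - q)))\<close>, which is at most \<open>1 \<plusminus> \<eta>\<close>.\<close>

lemma concave_on_div_one_minus_mono:
  fixes R :: "real \<Rightarrow> real" and x y :: real
  assumes conc: "concave_on {0<..1} R" and R1: "0 \<le> R 1"
    and "0 < x" and "x \<le> y" and "y < 1"
  shows "(1 - y) * R x \<le> (1 - x) * R y"
proof -
  define t where "t = (y - x) / (1 - x)"
  have t01: "0 \<le> t" "t \<le> 1"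
    using assms(3-5) by (auto simp: t_def)
  have "t * (1 - x) = y - x"
    using assms(4,5) by (simp add: t_def)
  hence y_comb: "(1 - t) * x + t * 1 = y"
    by (simp add: algebra_simps)
  have "(1 - t) * R x + t * R 1 \<le> R y"
    using concave_onD[OF conc t01, of x 1] assms(3-5) y_comb by simp
  moreover have "0 \<le> t * R 1"
    using t01 R1 by simp
  ultimately have "(1 - t) * R x \<le> R y"
    by linarith
  moreover have "1 - t = (1 - y) / (1 - x)"
    using assms(4,5) by (simp add: t_def field_simps)
  ultimately show ?thesis
    using assms(4,5) by (simp add: mult.commute pos_divide_le_eq)
qed

lemma concave_revenue_value_upper:
  fixes R V :: "real \<Rightarrow> real" and \<eta> q x :: real
  assumes conc: "concave_on {0<..1} R" and nonneg: "\<forall>p\<in>{0<..1}. 0 \<le> R p"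
    and RV: "\<And>p. R p = p * V p"
    and "0 < x" and "x \<le> q" and "q < 1"
    and close: "q - x \<le> \<eta> * ((1 - q) * x)"
  shows "q * V x \<le> (1 + \<eta>) * R q"
proof -
  have r0: "0 \<le> R q" and "0 \<le> R 1"
    using nonneg assms(4-6) by auto
  have "(1 - q) * (x * V x) \<le> (1 - x) * R q"
    using concave_on_div_one_minus_mono[OF conc \<open>0 \<le> R 1\<close> assms(4-6)] by (simp add: RV)
  hence "q * ((1 - q) * (x * V x)) \<le> q * ((1 - x) * R q)"
    using assms(4,5) by (simp add: mult_left_mono)
  hence "((1 - q) * x) * (q * V x) \<le> (q * (1 - x)) * R q"
    by (simp add: algebra_simps)
  also have "\<dots> \<le> ((1 - q) * x * (1 + \<eta>)) * R q"
    using close r0 by (intro mult_right_mono) (simp_all add: algebra_simps)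
  finally show ?thesis
    using assms(4,6) by (simp add: mult.assoc mult_le_cancel_left_pos)
qed

lemma concave_revenue_value_lower:
  fixes R V :: "real \<Rightarrow> real" and \<eta> q y :: real
  assumes conc: "concave_on {0<..1} R" and nonneg: "\<forall>p\<in>{0<..1}. 0 \<le> R p"
    and RV: "\<And>p. R p = p * V p"
    and "0 < q" and "q \<le> y" and "y < 1"
    and close: "y - q \<le> \<eta> * ((1 - q) * y)"
  shows "(1 - \<eta>) * R q \<le> q * V y"
proof -
  have r0: "0 \<le> R q" and "0 \<le> R 1"
    using nonneg assms(4-6) by auto
  have "((1 - q) * y * (1 - \<eta>)) * R q \<le> (q * (1 - y)) * R q"
    using close r0 by (intro mult_right_mono) (simp_all add: algebra_simps)
  also have "\<dots> \<le> q * ((1 - q) * (y * V y))"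
    using concave_on_div_one_minus_mono[OF conc \<open>0 \<le> R 1\<close> assms(4-6)] assms(4)
    by (simp add: RV mult_left_mono)
  finally show ?thesis
    using assms(4-6) by (simp add: mult.assoc mult.left_commute[of q] mult_le_cancel_left_pos)
qed

lemma eta_pos_le_one:
  fixes \<epsilon> :: real
  assumes "0 < \<epsilon>" and "\<epsilon> \<le> 1 / exp 1"
  shows "0 < \<epsilon> / ln (1 / \<epsilon>)" and "\<epsilon> / ln (1 / \<epsilon>) \<le> 1"
proof -
  have "exp 1 \<le> 1 / \<epsilon>"
    using assms by (simp add: field_simps)
  hence ln_ge: "1 \<le> ln (1 / \<epsilon>)"
    using assms(1) by (metis exp_gt_zero exp_le_cancel_iff exp_ln_iff less_le_trans)
  show "0 < \<epsilon> / ln (1 / \<epsilon>)"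
    using divide_pos_pos[OF assms(1), of "ln (1 / \<epsilon>)"] ln_ge by simp
  have "\<epsilon> \<le> 1"
    using assms(2) by (simp add: divide_le_eq_1_pos order_trans)
  thus "\<epsilon> / ln (1 / \<epsilon>) \<le> 1"
    using assms(1) ln_ge by (simp add: divide_le_eq)
qed

lemma concave_revenue_estimate:
  fixes R V :: "real \<Rightarrow> real" and \<eta> q \<Delta> v :: real
  assumes conc: "concave_on {0<..1} R" and nonneg: "\<forall>p\<in>{0<..1}. 0 \<le> R p"
    and RV: "\<And>p. R p = p * V p"
    and \<eta>: "0 < \<eta>" "\<eta> \<le> 1"
    and q: "0 < q" "q < 1"
    and \<Delta>: "0 < \<Delta>" "\<Delta> \<le> q * (1 - q) * \<eta>"
    and v: "V (q + \<Delta> / 2) \<le> v" "v \<le> V (q - \<Delta> / 2)"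
  shows "\<bar>q * v - R q\<bar> \<le> \<eta> * R q"
proof -
  have "\<eta> * (q * (1 - q)) \<le> q * (1 - q)"
    using q \<eta> by (intro mult_left_le_one_le) simp_all
  hence "\<Delta> \<le> q * (1 - q)"
    using \<Delta>(2) by (simp add: mult.commute)
  moreover have "q * (1 - q) \<le> q" and "q * (1 - q) \<le> 1 - q"
    using q by (simp_all add: mult_left_le mult_left_le_one_le)
  ultimately have lo: "q / 2 \<le> q - \<Delta> / 2" and hi: "q + \<Delta> / 2 < 1"
    using q(2) by linarith+
  have "\<Delta> / 2 \<le> \<eta> * ((1 - q) * (q / 2))"
    using \<Delta>(2) by (simp add: algebra_simps)
  also have "\<dots> \<le> \<eta> * ((1 - q) * (q - \<Delta> / 2))"
    using \<eta> q lo by (intro mult_left_mono) simp_all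
  finally have upper: "q * V (q - \<Delta> / 2) \<le> (1 + \<eta>) * R q"
    using q \<Delta>(1) lo by (intro concave_revenue_value_upper[OF conc nonneg RV]) simp_all
  have "\<Delta> / 2 \<le> \<eta> * ((1 - q) * q)"
    using \<Delta> by (simp add: algebra_simps)
  also have "\<dots> \<le> \<eta> * ((1 - q) * (q + \<Delta> / 2))"
    using \<eta> q \<Delta>(1) by (intro mult_left_mono) simp_all
  finally have lower: "(1 - \<eta>) * R q \<le> q * V (q + \<Delta> / 2)"
    using q \<Delta>(1) hi by (intro concave_revenue_value_lower[OF conc nonneg RV]) simp_all
  have "q * V (q + \<Delta> / 2) \<le> q * v" and "q * v \<le> q * V (q - \<Delta> / 2)"
    using q v by (simp_all add: mult_left_mono)
  with upper lower show ?thesis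
    by (simp add: abs_le_iff algebra_simps)
qed

theorem mainTheorem12:
  fixes D :: "real measure" and \<epsilon> \<eta> q \<Delta> v :: real
  assumes "0 < \<epsilon>" and "\<epsilon> \<le> 1 / exp 1"
    and "\<eta> = \<epsilon> / ln (1 / \<epsilon>)"
    and "regular D"
    and "AE x in D. 0 \<le> x"
    and "0 < q" and "q < 1"
    and "0 < \<Delta>" and "\<Delta> \<le> q * (1 - q) * \<eta>"
    and "value_at D (q + \<Delta> / 2) \<le> v" and "v \<le> value_at D (q - \<Delta> / 2)"
  shows "\<bar>q * v - revenue D q\<bar> / revenue D q \<le> \<eta>"
proof -
  have \<eta>: "0 < \<eta>" "\<eta> \<le> 1"
    using eta_pos_le_one[OF assms(1,2)] assms(3) by auto
  have conc: "concave_on {0<..1} (revenue D)" and nonneg: "\<forall>p\<in>{0<..1}. 0 \<le> revenue D p"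
    using assms(4) by (auto simp: regular_def)
  have "\<bar>q * v - revenue D q\<bar> \<le> \<eta> * revenue D q"
    by (rule concave_revenue_estimate[OF conc nonneg _ \<eta> assms(6-11)]) (simp add: revenue_def)
  moreover have "0 \<le> revenue D q"
    using nonneg assms(6,7) by simp
  \<comment> \<open>If \<open>R(q) = 0\<close> the quotient is \<open>0\<close> by the convention \<open>x / 0 = 0\<close>.\<close>
  ultimately show ?thesis
    using \<eta>(1) by (cases "revenue D q = 0") (simp_all add: pos_divide_le_eq)
qed

end
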